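(* Let $q>0$, $\mu=\sqrt q$, $H$ a $d$-dimensional Hilbert space with orthonormal basis $(\psi_r)$, $2\le n\le d$ and $1\le i_1<\dots<i_n\le d$. Set $\overline H_{i_1,\dots,i_n}:=\varepsilon(E_{n-1})H_{i_1,\dots,i_n}^{\otimes(n-1)}$, $R_{i_1,\dots,i_n}:=\frac{1}{\mu^{(n-1)/2}\sqrt{(n-1)!_q}}S_{i_1,\dots,i_n}$ and $\overline R_{i_1,\dots,i_n}:=(-1)^{n-1}R_{i_1,\dots,i_n}$. Then $R_{i_1,\dots,i_n}\in\overline H_{i_1,\dots,i_n}\otimes H_{i_1,\dots,i_n}$, $\overline R_{i_1,\dots,i_n}\in H_{i_1,\dots,i_n}\otimes\overline H_{i_1,\dots,i_n}$, and the conjugate equations hold: $(\overline R_{i_1,\dots,i_n}^*\otimes1_{H_{i_1,\dots,i_n}})(1_{H_{i_1,\dots,i_n}}\otimes R_{i_1,\dots,i_n})=1_{H_{i_1,\dots,i_n}}$, $(R_{i_1,\dots,i_n}^*\otimes1_{\overline H_{i_1,\dots,i_n}})(1_{\overline H_{i_1,\dots,i_n}}\otimes\overline R_{i_1,\dots,i_n})=1_{\overline H_{i_1,\dots,i_n}}$. Hence $\overline H_{i_1,\dots,i_n}$ is a conjugate of $H_{i_1,\dots,i_n}$ in the smallest tensor $*$-category of Hilbert spaces (with subobjects) containing $S_{i_1,\dots,i_n}$.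
   Context: $g_q$ on $H\otimes H$: $g_q\psi_i\otimes\psi_j=-\mu\psi_j\otimes\psi_i$ ($i<j$), $g_q\psi_i\otimes\psi_i=-\psi_i\otimes\psi_i$, $g_q\psi_i\otimes\psi_j=(q-1)\psi_i\otimes\psi_j-\mu\psi_j\otimes\psi_i$ ($i>j$); Jimbo–Woronowicz representation $\varepsilon(g_i)=1_{H^{\otimes(i-1)}}\otimes g_q\otimes1$ of the Hecke algebras $H_m(q)$. $A_1=1$, $A_{m+1}=\sum_{i=0}^mg_i\cdots g_1\sigma(A_m)$, $\sigma(g_i)=g_{i+1}$, $m!_q=\prod_{j=1}^m(1+\dots+q^{j-1})$, $E_m=A_m/m!_q$. $S_{i_1,\dots,i_n}:=\sum_{p\in\mathbb P_n}(-\mu)^{i(p)}\psi_{i_{p(1)}}\otimes\dots\otimes\psi_{i_{p(n)}}$ with $i(p)$ the number of inversions of $p$, viewed as a map $\mathbb C\to H^{\otimes n}$. $H_{i_1,\dots,i_n}=\mathrm{span}\{\psi_{i_1},\dots,\psi_{i_n}\}$. Objects $\sigma,\bar\sigma$ are conjugate if there are $R\in(\iota,\bar\sigma\otimes\sigma)$, $\bar R\in(\iota,\sigma\otimes\bar\sigma)$ satisfying the two conjugate equations above. *)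

theory Defs
  imports "HOL-Analysis.Analysis" "HOL-Combinatorics.Permutations"
begin

text \<open>Model: H = C^d with orthonormal basis psi_1,...,psi_d.  A vector of the tensor
power H^{(x)m} is a function  nat list => complex  supported on lists of length m
with entries in {1..d}; the value at [j1,...,jm] is the coefficient of
psi_j1 (x) ... (x) psi_jm.\<close>

type_synonym tvec = "nat list \<Rightarrow> complex"

definition words :: "nat \<Rightarrow> nat \<Rightarrow> nat list set" where
  "words d m = {js. length js = m \<and> set js \<subseteq> {1..d}}"

text \<open>Tensor powers of the subspace spanned by the basis vectors with indices in I.\<close>
definition tpow_sub :: "nat set \<Rightarrow> nat \<Rightarrow> tvec set" where
  "tpow_sub I m = {v. \<forall>js. v js \<noteq> 0 \<longrightarrow> length js = m \<and> set js \<subseteq> I}"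

text \<open>Tensor product of vectors, the first factor living in a k-th tensor power.\<close>
definition tens :: "nat \<Rightarrow> tvec \<Rightarrow> tvec \<Rightarrow> tvec" where
  "tens k v w = (\<lambda>js. v (take k js) * w (drop k js))"

definition cspan :: "tvec set \<Rightarrow> tvec set" where
  "cspan S = {x. \<exists>F c. finite F \<and> F \<subseteq> S \<and> x = (\<lambda>js. \<Sum>v\<in>F. c v * v js)}"

definition tens_sub :: "nat \<Rightarrow> tvec set \<Rightarrow> tvec set \<Rightarrow> tvec set" where
  "tens_sub k V W = cspan {tens k v w | v w. v \<in> V \<and> w \<in> W}"

definition mu :: "real \<Rightarrow> complex" where
  "mu q = complex_of_real (sqrt q)"

text \<open>epsilon(g_i) = 1 (x) g_q (x) 1, acting on the tensor factors i and i+1 (1-indexed).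
The coefficient formula is obtained from
  g_q(psi_a(x)psi_b) = -mu psi_b(x)psi_a (a<b),  g_q(psi_a(x)psi_a) = -psi_a(x)psi_a,
  g_q(psi_a(x)psi_b) = (q-1) psi_a(x)psi_b - mu psi_b(x)psi_a (a>b).
Outside the range 1 <= i < length it is (irrelevantly) the identity.\<close>
definition gop :: "real \<Rightarrow> nat \<Rightarrow> tvec \<Rightarrow> tvec" where
  "gop q i v js =
    (if 1 \<le> i \<and> i < length js then
       (let a = js ! (i - 1); b = js ! i; sw = js[i - 1 := b, i := a] in
        if a = b then - v js
        else - mu q * v sw + (if b < a then complex_of_real (q - 1) * v js else 0))
     else v js)"

primrec gprod :: "real \<Rightarrow> nat \<Rightarrow> nat \<Rightarrow> tvec \<Rightarrow> tvec" where
  "gprod q s 0 = id"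
| "gprod q s (Suc i) = gop q (Suc i + s) \<circ> gprod q s i"

text \<open>Aop q m s = epsilon(sigma^s(A_m)), where A_1 = 1,
  A_(m+1) = sum_(i=0..m) g_i ... g_1 sigma(A_m),  sigma(g_i) = g_(i+1).\<close>
fun Aop :: "real \<Rightarrow> nat \<Rightarrow> nat \<Rightarrow> tvec \<Rightarrow> tvec" where
  "Aop q 0 s = id"
| "Aop q (Suc 0) s = id"
| "Aop q (Suc (Suc m)) s =
     (\<lambda>v js. \<Sum>i\<le>Suc m. gprod q s i (Aop q (Suc m) (Suc s) v) js)"

definition qfact :: "real \<Rightarrow> nat \<Rightarrow> real" where
  "qfact q m = (\<Prod>j=1..m. \<Sum>k<j. q ^ k)"

definition Eop :: "real \<Rightarrow> nat \<Rightarrow> tvec \<Rightarrow> tvec" where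
  "Eop q m v = (\<lambda>js. Aop q m 0 v js / complex_of_real (qfact q m))"

definition inversions :: "nat \<Rightarrow> (nat \<Rightarrow> nat) \<Rightarrow> nat" where
  "inversions n p = card {(a, b). a < b \<and> b < n \<and> p b < p a}"

definition Svec :: "real \<Rightarrow> nat list \<Rightarrow> tvec" where
  "Svec q is = (\<lambda>js. \<Sum>p\<in>{p. p permutes {..<length is}}.
      (- mu q) ^ inversions (length is) p *
      (if js = map (\<lambda>k. is ! p k) [0..<length is] then 1 else 0))"

definition Rvec :: "real \<Rightarrow> nat list \<Rightarrow> tvec" where
  "Rvec q is = (\<lambda>js. Svec q is js /
      complex_of_real (sqrt q powr ((real (length is) - 1) / 2)
                       * sqrt (qfact q (length is - 1))))"

definition Rbar :: "real \<Rightarrow> nat list \<Rightarrow> tvec" where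
  "Rbar q is = (\<lambda>js. (-1) ^ (length is - 1) * Rvec q is js)"

definition Hbar :: "real \<Rightarrow> nat list \<Rightarrow> tvec set" where
  "Hbar q is = Eop q (length is - 1) ` tpow_sub (set is) (length is - 1)"

text \<open>(X^* (x) 1) z for X in H^(x)n: contraction of the first n tensor factors of z
against X, X^* y = <X, y>.\<close>
definition contract :: "nat \<Rightarrow> nat \<Rightarrow> tvec \<Rightarrow> tvec \<Rightarrow> tvec" where
  "contract d n X z = (\<lambda>ks. \<Sum>js\<in>words d n. cnj (X js) * z (js @ ks))"

end

(* Every epsilon(g_j) satisfies (g - q)(g + 1) = 0, and Hbar is exactly the space of tensors in
   H_I^(n-1) lying in the q-eigenspace of all the g_j: the quadratic and braid relations show
   that A_m maps into this joint eigenspace, on which it acts as m!_q, so E_m is the projection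
   onto it. S is the q-wedge sum over the orderings sigma of I = {i_1,...,i_n} of
   (-mu)^inv(sigma) psi_sigma. Splitting off its last or first tensor factor writes it as
   sum_k y_k (x) psi_k or sum_k psi_k (x) z_k with q-antisymmetric y_k, z_k, whence the two
   membership claims. In both conjugate equations the contraction collapses to a sum over the
   orderings tau of I minus one index of (-mu)^(n-1) q^inv(tau), which is (-mu)^(n-1) (n-1)!_q
   by the generating function of inversions; the normalisation of R cancels this factor. *)

theory Submission
  imports Defs "HOL-Combinatorics.Multiset_Permutations"
begin

section \<open>Hecke generators on tensor words\<close>

lemma gop_split:
  "gop q (Suc (length xs)) v (xs @ a # b # ys) =
    (if a = b then - v (xs @ a # b # ys)
     else - mu q * v (xs @ b # a # ys)
          + (if b < a then complex_of_real (q - 1) * v (xs @ a # b # ys) else 0))"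
  by (simp add: gop_def Let_def nth_append list_update_append)

lemma gop_less:
  "a < b \<Longrightarrow> gop q (Suc (length xs)) v (xs @ a # b # ys) = - mu q * v (xs @ b # a # ys)"
  by (simp add: gop_split)

lemma gop_greater:
  "b < a \<Longrightarrow> gop q (Suc (length xs)) v (xs @ a # b # ys) =
     - mu q * v (xs @ b # a # ys) + complex_of_real (q - 1) * v (xs @ a # b # ys)"
  by (simp add: gop_split)

lemma gop_equal: "gop q (Suc (length xs)) v (xs @ a # a # ys) = - v (xs @ a # a # ys)"
  by (simp add: gop_split)

lemma gop_outside: "\<not> (1 \<le> i \<and> i < length js) \<Longrightarrow> gop q i v js = v js"
  unfolding gop_def by auto

lemma split_at_position:
  assumes "1 \<le> i" "i < length js"
  obtains xs a b ys where "js = xs @ a # b # ys" "i = Suc (length xs)"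
proof -
  have "js = take (i - 1) js @ js ! (i - 1) # js ! i # drop (Suc i) js"
    using assms id_take_nth_drop[of "i - 1" js] Cons_nth_drop_Suc[of i js] by simp
  with that show ?thesis using assms by simp
qed

lemma gop_scale: "gop q i (\<lambda>js. c * v js) = (\<lambda>js. c * gop q i v js)"
  by (rule ext) (simp add: gop_def Let_def algebra_simps)

lemma gop_sum: "gop q i (\<lambda>js. \<Sum>x\<in>A. f x js) = (\<lambda>js. \<Sum>x\<in>A. gop q i (f x) js)"
proof
  fix js
  show "gop q i (\<lambda>js. \<Sum>x\<in>A. f x js) js = (\<Sum>x\<in>A. gop q i (f x) js)"
  proof (cases "1 \<le> i \<and> i < length js")
    case True
    then show ?thesis
      by (cases "js ! (i - 1) = js ! i"; cases "js ! i < js ! (i - 1)")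
         (simp_all add: gop_def Let_def sum_distrib_left sum.distrib sum_negf sum_subtractf)
  qed (simp add: gop_outside)
qed

lemma gop_comm: "i + 2 \<le> j \<Longrightarrow> gop q i (gop q j v) = gop q j (gop q i v)"
  by (rule ext) (auto simp: gop_def Let_def nth_list_update list_update_swap algebra_simps)

lemma gop_append:
  assumes "1 \<le> j" "j < length \<sigma>"
  shows "gop q j (\<lambda>\<sigma>. y (\<sigma> @ ks)) \<sigma> = gop q j y (\<sigma> @ ks)"
proof -
  obtain xs a b zs where "\<sigma> = xs @ a # b # zs" "j = Suc (length xs)"
    using split_at_position assms by blast
  then show ?thesis using gop_split[of q xs _ a b "zs @ ks"] by (simp add: gop_split)
qed

lemma gop_Cons:
  assumes "1 \<le> j" "j < length \<sigma>"
  shows "gop q j (\<lambda>\<sigma>. y (k # \<sigma>)) \<sigma> = gop q (Suc j) y (k # \<sigma>)"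
proof -
  obtain xs a b zs where "\<sigma> = xs @ a # b # zs" "j = Suc (length xs)"
    using split_at_position assms by blast
  then show ?thesis using gop_split[of q "k # xs" y a b zs] by (simp add: gop_split)
qed

lemma tpow_sub_zero: "v \<in> tpow_sub I L \<Longrightarrow> length js \<noteq> L \<Longrightarrow> v js = 0"
  unfolding tpow_sub_def by auto

lemma tpow_sub_scale: "v \<in> tpow_sub I L \<Longrightarrow> (\<lambda>js. c * v js) \<in> tpow_sub I L"
  unfolding tpow_sub_def by auto

lemma tpow_sub_sum:
  assumes "\<And>x. x \<in> A \<Longrightarrow> f x \<in> tpow_sub I L"
  shows "(\<lambda>js. \<Sum>x\<in>A. f x js) \<in> tpow_sub I L"
  unfolding tpow_sub_def
proof (intro CollectI allI impI)
  fix js assume "(\<Sum>x\<in>A. f x js) \<noteq> 0"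
  then obtain x where "x \<in> A" "f x js \<noteq> 0" by (meson sum.neutral)
  with assms show "length js = L \<and> set js \<subseteq> I" unfolding tpow_sub_def by blast
qed

lemma tpow_sub_append: "y \<in> tpow_sub I L \<Longrightarrow> (\<lambda>\<sigma>. y (\<sigma> @ ks)) \<in> tpow_sub I (L - length ks)"
  unfolding tpow_sub_def by force

lemma tpow_sub_Cons: "y \<in> tpow_sub I L \<Longrightarrow> (\<lambda>\<sigma>. y (k # \<sigma>)) \<in> tpow_sub I (L - 1)"
  unfolding tpow_sub_def by force

lemma gop_tpow_sub:
  assumes v: "v \<in> tpow_sub I L"
  shows "gop q i v \<in> tpow_sub I L"
  unfolding tpow_sub_def
proof (intro CollectI allI impI)
  fix js assume nz: "gop q i v js \<noteq> 0"
  show "length js = L \<and> set js \<subseteq> I"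
  proof (cases "1 \<le> i \<and> i < length js")
    case True
    then obtain xs a b ys where js: "js = xs @ a # b # ys" "i = Suc (length xs)"
      using split_at_position by blast
    have swap: "length (xs @ b # a # ys) = length js" "set (xs @ b # a # ys) = set js"
      unfolding js by auto
    from nz have "v js \<noteq> 0 \<or> v (xs @ b # a # ys) \<noteq> 0"
      unfolding js by (auto simp: gop_split split: if_splits)
    with v show ?thesis unfolding tpow_sub_def by (metis (mono_tags, lifting) mem_Collect_eq swap)
  next
    case False
    with nz v show ?thesis unfolding tpow_sub_def by (simp add: gop_outside)
  qed
qed

lemma mu_mult_self: "q \<ge> 0 \<Longrightarrow> mu q * mu q = complex_of_real q"
  by (simp add: mu_def flip: of_real_mult)

lemma neg_mu_power_square: "q \<ge> 0 \<Longrightarrow> (- mu q) ^ i * (- mu q) ^ i = complex_of_real q ^ i"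
  by (simp add: power_mult_distrib[symmetric] mu_mult_self)

lemma gop_quadratic:
  assumes q: "q \<ge> 0" and v: "v \<in> tpow_sub I L" and i: "1 \<le> i" "i < L"
  shows "gop q i (gop q i v) = (\<lambda>js. complex_of_real (q - 1) * gop q i v js + q * v js)"
proof
  fix js
  show "gop q i (gop q i v) js = complex_of_real (q - 1) * gop q i v js + q * v js"
  proof (cases "length js = L")
    case True
    with i have "1 \<le> i" "i < length js" by auto
    then obtain xs a b ys where js: "js = xs @ a # b # ys" "i = Suc (length xs)"
      by (rule split_at_position)
    have m: "complex_of_real q = mu q * mu q" "complex_of_real (q - 1) = mu q * mu q - 1"
      using mu_mult_self[OF q] by simp_all
    show ?thesis unfolding js
      by (cases rule: linorder_cases[of a b])
         (simp_all add: gop_less gop_greater gop_equal m algebra_simps)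
  next
    case False
    then show ?thesis
      using tpow_sub_zero[OF v] tpow_sub_zero[OF gop_tpow_sub[OF v]]
        tpow_sub_zero[OF gop_tpow_sub[OF gop_tpow_sub[OF v]]] by simp
  qed
qed

lemma gop_braid:
  assumes q: "q \<ge> 0" and v: "v \<in> tpow_sub I L" and i: "1 \<le> i" "i + 2 \<le> L"
  shows "gop q i (gop q (Suc i) (gop q i v)) = gop q (Suc i) (gop q i (gop q (Suc i) v))"
proof
  fix js
  show "gop q i (gop q (Suc i) (gop q i v)) js = gop q (Suc i) (gop q i (gop q (Suc i) v)) js"
  proof (cases "length js = L")
    case True
    with i have "1 \<le> i" "i < length js" by auto
    then obtain xs a b ys where js: "js = xs @ a # b # ys" "i = Suc (length xs)"
      by (rule split_at_position)
    with True i obtain c zs where ys: "ys = c # zs" by (cases ys) auto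
    have m: "complex_of_real q = mu q * mu q" "complex_of_real (q - 1) = mu q * mu q - 1"
      using mu_mult_self[OF q] by simp_all
    note shifted = gop_less[where xs = "xs @ [u]" for u, simplified]
      gop_greater[where xs = "xs @ [u]" for u, simplified]
      gop_equal[where xs = "xs @ [u]" for u, simplified]
    show ?thesis unfolding js ys
      by (cases rule: linorder_cases[of a b]; cases rule: linorder_cases[of b c];
          cases rule: linorder_cases[of a c];
          (linarith | simp add: gop_less gop_greater gop_equal shifted m algebra_simps))
  next
    case False
    then show ?thesis
      using tpow_sub_zero[OF gop_tpow_sub[OF gop_tpow_sub[OF gop_tpow_sub[OF v]]]] by simp
  qed
qed

section \<open>The q-antisymmetrizer\<close>

lemma gprod_scale: "gprod q s i (\<lambda>js. c * v js) = (\<lambda>js. c * gprod q s i v js)"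
  by (induction i) (simp_all add: gop_scale)

lemma gprod_tpow_sub: "v \<in> tpow_sub I L \<Longrightarrow> gprod q s i v \<in> tpow_sub I L"
  by (induction i) (simp_all add: gop_tpow_sub)

lemma gop_gprod_comm: "s + i + 2 \<le> j \<Longrightarrow> gop q j (gprod q s i v) = gprod q s i (gop q j v)"
proof (induction i)
  case (Suc i)
  have "gop q j (gprod q s (Suc i) v) = gop q (Suc i + s) (gop q j (gprod q s i v))"
    using Suc.prems by (simp add: gop_comm)
  also have "\<dots> = gprod q s (Suc i) (gop q j v)"
    using Suc by simp
  finally show ?case .
qed simp

lemma gop_gprod_braid:
  assumes q: "q \<ge> 0" and w: "w \<in> tpow_sub I L" and k: "1 \<le> k" "k < i" and i: "s + i < L"
  shows "gop q (s + k) (gprod q s i w) = gprod q s i (gop q (Suc (s + k)) w)"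
  using k(2) i
proof (induction i)
  case (Suc i)
  show ?case
  proof (cases "k = i")
    case True
    obtain k' where k': "k = Suc k'" using k(1) by (cases k) auto
    with True have ik: "i = Suc k'" by simp
    let ?u = "gprod q s k' w"
    have "gop q (s + k) (gprod q s (Suc i) w)
            = gop q (s + k) (gop q (Suc (s + k)) (gop q (s + k) ?u))"
      unfolding ik k' by (simp add: add.commute)
    also have "\<dots> = gop q (Suc (s + k)) (gop q (s + k) (gop q (Suc (s + k)) ?u))"
      using Suc.prems True k(1) by (intro gop_braid[OF q gprod_tpow_sub[OF w]]) auto
    also have "\<dots> = gop q (Suc (s + k)) (gop q (s + k) (gprod q s k' (gop q (Suc (s + k)) w)))"
      using k' by (simp add: gop_gprod_comm)
    also have "\<dots> = gprod q s (Suc i) (gop q (Suc (s + k)) w)"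
      unfolding ik k' by (simp add: add.commute)
    finally show ?thesis .
  next
    case False
    with Suc show ?thesis by (simp add: gop_comm[of "s + k" "Suc (i + s)"])
  qed
qed simp

definition q_eigen :: "real \<Rightarrow> nat \<Rightarrow> tvec \<Rightarrow> bool" where
  "q_eigen q j w \<longleftrightarrow> gop q j w = (\<lambda>js. complex_of_real q * w js)"

lemma q_eigen_gprod_far: "q_eigen q j u \<Longrightarrow> s + i + 2 \<le> j \<Longrightarrow> q_eigen q j (gprod q s i u)"
  unfolding q_eigen_def by (simp add: gop_gprod_comm gprod_scale)

lemma q_eigen_gprod_braid:
  "q \<ge> 0 \<Longrightarrow> u \<in> tpow_sub I L \<Longrightarrow> q_eigen q (Suc (s + k)) u \<Longrightarrow> 1 \<le> k \<Longrightarrow> k < i \<Longrightarrow> s + i < L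
    \<Longrightarrow> q_eigen q (s + k) (gprod q s i u)"
  unfolding q_eigen_def by (simp add: gop_gprod_braid gprod_scale)

lemma gprod_q_eigen:
  "(\<And>j. s < j \<Longrightarrow> j \<le> s + i \<Longrightarrow> q_eigen q j v) \<Longrightarrow> gprod q s i v = (\<lambda>js. complex_of_real q ^ i * v js)"
proof (induction i)
  case (Suc i)
  have "gprod q s (Suc i) v = gop q (Suc i + s) (gprod q s i v)"
    by simp
  also have "\<dots> = gop q (Suc i + s) (\<lambda>js. complex_of_real q ^ i * v js)"
    using Suc by simp
  also have "\<dots> = (\<lambda>js. complex_of_real q ^ i * gop q (Suc i + s) v js)"
    by (rule gop_scale)
  also have "\<dots> = (\<lambda>js. complex_of_real q ^ Suc i * v js)"
    using Suc.prems[of "Suc i + s"] by (simp add: q_eigen_def mult_ac)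
  finally show ?case .
qed simp

lemma Aop_tpow_sub: "v \<in> tpow_sub I L \<Longrightarrow> Aop q m s v \<in> tpow_sub I L"
proof (induction q m s rule: Aop.induct)
  case (3 q m s)
  then have "Aop q (Suc m) (Suc s) v \<in> tpow_sub I L" using "3.IH"[of 0] by simp
  then show ?case by (simp only: Aop.simps) (intro tpow_sub_sum gprod_tpow_sub)
qed simp_all

lemma q_eigen_gprod_other:
  assumes q: "q \<ge> 0" and u: "u \<in> tpow_sub I L" and L: "s + Suc (Suc m) \<le> L"
    and eig: "\<And>j. Suc s < j \<Longrightarrow> j < s + Suc (Suc m) \<Longrightarrow> q_eigen q j u"
    and k: "1 \<le> k" "k \<le> Suc m" and i: "i \<le> Suc m" "Suc i \<noteq> k" "i \<noteq> k"
  shows "q_eigen q (s + k) (gprod q s i u)"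
proof (cases "k < i")
  case True
  with q u L k i show ?thesis by (intro q_eigen_gprod_braid eig) auto
next
  case False
  with k i show ?thesis by (intro q_eigen_gprod_far eig) auto
qed

lemma q_eigen_sum_gprod:
  assumes q: "q \<ge> 0" and u: "u \<in> tpow_sub I L" and L: "s + Suc (Suc m) \<le> L"
    and eig: "\<And>j. Suc s < j \<Longrightarrow> j < s + Suc (Suc m) \<Longrightarrow> q_eigen q j u"
    and k: "1 \<le> k" "k \<le> Suc m"
  shows "q_eigen q (s + k) (\<lambda>js. \<Sum>i\<le>Suc m. gprod q s i u js)"
proof -
  define t where "t i = gprod q s i u" for i
  obtain k' where k': "k = Suc k'" using k(1) by (cases k) auto
  have prev: "gop q (s + k) (t k') = t k"
    unfolding t_def k' by (simp add: add.commute)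
  have "t k' \<in> tpow_sub I L"
    unfolding t_def by (rule gprod_tpow_sub[OF u])
  then have same: "gop q (s + k) (t k) = (\<lambda>js. complex_of_real (q - 1) * t k js + q * t k' js)"
    unfolding prev[symmetric] using q L k by (intro gop_quadratic) auto
  (* g_(s+k) sends the k'-th summand to the k-th one and, by the quadratic relation, the k-th one
     to (q - 1) times itself plus q times the k'-th one; on all other summands it acts by q.
     The two defects d cancel in the sum. *)
  define d where "d js = t k js - q * t k' js" for js
  have step: "gop q (s + k) (t i) js
      = q * t i js + (if i = k' then d js else 0) - (if i = k then d js else 0)"
    if "i \<le> Suc m" for i js
  proof -
    have "k' \<noteq> k" using k' by simp
    consider "i = k'" | "i = k" | "Suc i \<noteq> k" "i \<noteq> k"
      using k' by blast
    then show ?thesis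
    proof cases
      case 3
      then have "q_eigen q (s + k) (t i)"
        unfolding t_def using q_eigen_gprod_other[OF q u L eig k that] by blast
      with 3 k' show ?thesis by (auto simp: q_eigen_def)
    qed (use prev same \<open>k' \<noteq> k\<close> in \<open>simp_all add: d_def algebra_simps\<close>)
  qed
  show ?thesis unfolding q_eigen_def
  proof
    fix js
    have "gop q (s + k) (\<lambda>js. \<Sum>i\<le>Suc m. gprod q s i u js) js = (\<Sum>i\<le>Suc m. gop q (s + k) (t i) js)"
      unfolding t_def gop_sum ..
    also have "\<dots> = (\<Sum>i\<le>Suc m. q * t i js + (if i = k' then d js else 0)
                                   - (if i = k then d js else 0))"
      using step by (intro sum.cong) auto
    also have "\<dots> = q * (\<Sum>i\<le>Suc m. t i js)"
      using k k' by (simp add: sum.distrib sum_subtractf sum_distrib_left del: sum.atMost_Suc)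
    finally show "gop q (s + k) (\<lambda>js. \<Sum>i\<le>Suc m. gprod q s i u js) js
                    = q * (\<Sum>i\<le>Suc m. gprod q s i u js)"
      unfolding t_def .
  qed
qed

lemma Aop_q_eigen:
  "q \<ge> 0 \<Longrightarrow> v \<in> tpow_sub I L \<Longrightarrow> s + m \<le> L \<Longrightarrow> s < j \<Longrightarrow> j < s + m
    \<Longrightarrow> q_eigen q j (Aop q m s v)"
proof (induction q m s arbitrary: j rule: Aop.induct)
  case (3 q m s)
  have "q_eigen q (s + (j - s)) (\<lambda>js. \<Sum>i\<le>Suc m. gprod q s i (Aop q (Suc m) (Suc s) v) js)"
  proof (rule q_eigen_sum_gprod)
    show "Aop q (Suc m) (Suc s) v \<in> tpow_sub I L"
      using "3.prems"(2) by (rule Aop_tpow_sub)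
    show "q_eigen q j' (Aop q (Suc m) (Suc s) v)" if "Suc s < j'" "j' < s + Suc (Suc m)" for j'
      using "3.IH"[of 0 j'] "3.prems" that by simp
  qed (use "3.prems" in auto)
  with "3.prems" show ?case by simp
qed simp_all

lemma qfact_Suc: "qfact q (Suc m) = qfact q m * (\<Sum>k<Suc m. q ^ k)"
  by (simp add: qfact_def)

lemma qfact_pos: "q > 0 \<Longrightarrow> qfact q m > 0"
  unfolding qfact_def by (intro prod_pos ballI sum_pos) (auto simp: lessThan_empty_iff)

lemma Aop_on_q_eigen:
  "(\<And>j. s < j \<Longrightarrow> j < s + m \<Longrightarrow> q_eigen q j v) \<Longrightarrow>
    Aop q m s v = (\<lambda>js. complex_of_real (qfact q m) * v js)"
proof (induction q m s rule: Aop.induct)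
  case (3 q m s)
  have IH: "Aop q (Suc m) (Suc s) v = (\<lambda>js. complex_of_real (qfact q (Suc m)) * v js)"
    using "3.IH"[of 0] "3.prems" by simp
  have g: "gprod q s i v = (\<lambda>js. complex_of_real q ^ i * v js)" if "i \<le> Suc m" for i
    using "3.prems" that by (intro gprod_q_eigen) auto
  show ?case
  proof
    fix js
    have "Aop q (Suc (Suc m)) s v js
        = (\<Sum>i\<le>Suc m. complex_of_real (qfact q (Suc m)) * (complex_of_real q ^ i * v js))"
      by (simp only: Aop.simps IH gprod_scale) (rule sum.cong, simp_all add: g)
    also have "\<dots> = complex_of_real (qfact q (Suc m) * (\<Sum>i<Suc (Suc m). q ^ i)) * v js"
      by (simp add: sum_distrib_left sum_distrib_right lessThan_Suc_atMost mult_ac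
               del: sum.atMost_Suc sum.lessThan_Suc)
    finally show "Aop q (Suc (Suc m)) s v js = complex_of_real (qfact q (Suc (Suc m))) * v js"
      by (simp only: qfact_Suc[of q "Suc m"])
  qed
qed (simp_all add: qfact_def)

definition q_antisym :: "real \<Rightarrow> tvec \<Rightarrow> bool" where
  "q_antisym q y \<longleftrightarrow>
     (\<forall>j js. 1 \<le> j \<longrightarrow> j < length js \<longrightarrow> gop q j y js = complex_of_real q * y js)"

lemma q_antisym_iff_q_eigen:
  assumes y: "y \<in> tpow_sub I L"
  shows "q_antisym q y \<longleftrightarrow> (\<forall>j. 1 \<le> j \<longrightarrow> j < L \<longrightarrow> q_eigen q j y)"
proof -
  have off: "gop q j y js = complex_of_real q * y js" if "length js \<noteq> L" for j js
    using that tpow_sub_zero[OF y] tpow_sub_zero[OF gop_tpow_sub[OF y]] by simp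
  show ?thesis
    unfolding q_antisym_def q_eigen_def
    by (metis (mono_tags, opaque_lifting) off)
qed

lemma Eop_image:
  assumes q: "q > 0"
  shows "Eop q L ` tpow_sub I L = {y \<in> tpow_sub I L. q_antisym q y}"
proof (intro equalityI subsetI)
  fix y assume "y \<in> Eop q L ` tpow_sub I L"
  then obtain v where v: "v \<in> tpow_sub I L" and y: "y = Eop q L v" by blast
  define c where "c = inverse (complex_of_real (qfact q L))"
  have y': "y = (\<lambda>js. c * Aop q L 0 v js)"
    unfolding y Eop_def c_def by (simp add: field_simps)
  have yI: "y \<in> tpow_sub I L"
    unfolding y' by (intro tpow_sub_scale Aop_tpow_sub v)
  have "q_eigen q j y" if "1 \<le> j" "j < L" for j
    using Aop_q_eigen[of q v I L 0 L j] q v that unfolding y' q_eigen_def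
    by (simp add: gop_scale mult.left_commute)
  with yI show "y \<in> {y \<in> tpow_sub I L. q_antisym q y}"
    by (simp add: q_antisym_iff_q_eigen)
next
  fix y assume "y \<in> {y \<in> tpow_sub I L. q_antisym q y}"
  then have yI: "y \<in> tpow_sub I L" and "q_antisym q y" by auto
  then have "q_eigen q j y" if "0 < j" "j < L" for j
    using that by (simp add: q_antisym_iff_q_eigen)
  then have "Aop q L 0 y = (\<lambda>js. complex_of_real (qfact q L) * y js)"
    by (intro Aop_on_q_eigen) simp
  then have "Eop q L y = y"
    using qfact_pos[OF q, of L] by (simp add: Eop_def)
  with yI show "y \<in> Eop q L ` tpow_sub I L" by (metis image_eqI)
qed

section \<open>Inversions and the vector S\<close>

fun inversion_count :: "'a::linorder list \<Rightarrow> nat" where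
  "inversion_count [] = 0"
| "inversion_count (x # xs) = length (filter (\<lambda>y. y < x) xs) + inversion_count xs"

lemma inversion_count_swap:
  "a < b \<Longrightarrow> inversion_count (xs @ b # a # ys) = Suc (inversion_count (xs @ a # b # ys))"
  by (induction xs) auto

lemma inversion_count_snoc:
  "inversion_count (xs @ [x]) = inversion_count xs + length (filter (\<lambda>y. x < y) xs)"
  by (induction xs) auto

lemma inversion_count_sorted: "sorted xs \<Longrightarrow> inversion_count xs = 0"
  by (induction xs) (auto simp: filter_empty_conv not_less)

lemma inversion_count_card:
  "inversion_count xs = card {(a, b). a < b \<and> b < length xs \<and> xs ! b < xs ! a}"
proof (induction xs)
  case (Cons x xs)
  define S where "S = {(a, b). a < b \<and> b < length xs \<and> xs ! b < xs ! a}"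
  define A where "A = (\<lambda>b. (0::nat, Suc b)) ` {b. b < length xs \<and> xs ! b < x}"
  define B where "B = map_prod Suc Suc ` S"
  have "{(a, b). a < b \<and> b < length (x # xs) \<and> (x # xs) ! b < (x # xs) ! a} = A \<union> B"
  proof (rule set_eqI)
    fix p :: "nat \<times> nat"
    show "p \<in> {(a, b). a < b \<and> b < length (x # xs) \<and> (x # xs) ! b < (x # xs) ! a} \<longleftrightarrow> p \<in> A \<union> B"
      unfolding A_def B_def S_def by (cases p; case_tac a; case_tac b) (auto simp: image_iff)
  qed
  moreover have "finite S"
    unfolding S_def by (rule finite_subset[of _ "{..<length xs} \<times> {..<length xs}"]) auto
  then have "card (A \<union> B) = card A + card B"
    by (intro card_Un_disjoint) (auto simp: A_def B_def)
  moreover have "card A = length (filter (\<lambda>y. y < x) xs)"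
    unfolding A_def by (subst card_image) (auto simp: inj_on_def length_filter_conv_card)
  moreover have "card B = card S"
    unfolding B_def by (rule card_image) (auto simp: inj_on_def)
  ultimately show ?case using Cons.IH by (simp add: S_def)
qed simp

definition qwedge :: "real \<Rightarrow> nat set \<Rightarrow> tvec" where
  "qwedge q I js = (if js \<in> permutations_of_set I then (- mu q) ^ inversion_count js else 0)"

lemma bij_betw_permute_list:
  assumes "distinct xs"
  shows "bij_betw (\<lambda>p. permute_list p xs) {p. p permutes {..<length xs}}
           (permutations_of_set (set xs))"
proof (rule bij_betw_imageI)
  show "inj_on (\<lambda>p. permute_list p xs) {p. p permutes {..<length xs}}"
  proof (rule inj_onI)
    fix p p' assume p: "p \<in> {p. p permutes {..<length xs}}" "p' \<in> {p. p permutes {..<length xs}}"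
      and eq: "permute_list p xs = permute_list p' xs"
    show "p = p'"
    proof
      fix k
      show "p k = p' k"
      proof (cases "k < length xs")
        case True
        then have "xs ! p k = xs ! p' k"
          using p eq permute_list_nth by (metis mem_Collect_eq)
        moreover have "p k < length xs" "p' k < length xs"
          using p True by (auto dest: permutes_in_image)
        ultimately show ?thesis using assms by (simp add: nth_eq_iff_index_eq)
      next
        case False
        with p show ?thesis by (simp add: permutes_not_in)
      qed
    qed
  qed
  show "(\<lambda>p. permute_list p xs) ` {p. p permutes {..<length xs}} = permutations_of_set (set xs)"
  proof (intro equalityI subsetI)
    fix ys assume "ys \<in> (\<lambda>p. permute_list p xs) ` {p. p permutes {..<length xs}}"
    with assms show "ys \<in> permutations_of_set (set xs)" by auto
  next
    fix ys assume "ys \<in> permutations_of_set (set xs)"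
    then have "set ys = set xs" "distinct ys" by (simp_all add: permutations_of_set_def)
    with assms have "mset ys = mset xs" by (simp add: set_eq_iff_mset_eq_distinct)
    then obtain p where "p permutes {..<length xs}" "permute_list p xs = ys"
      by (rule mset_eq_permutation)
    then show "ys \<in> (\<lambda>p. permute_list p xs) ` {p. p permutes {..<length xs}}" by blast
  qed
qed

lemma inversions_eq_inversion_count:
  assumes xs: "sorted_wrt (<) xs" and p: "p permutes {..<length xs}"
  shows "inversions (length xs) p = inversion_count (permute_list p xs)"
proof -
  have "p b < p a \<longleftrightarrow> xs ! p b < xs ! p a" if "a < length xs" "b < length xs" for a b
    using that permutes_in_image[OF p] sorted_wrt_nth_less[OF xs] xs
    by (metis lessThan_iff linorder_neqE_nat not_less_iff_gr_or_eq)
  then have "{(a, b). a < b \<and> b < length xs \<and> p b < p a}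
      = {(a, b). a < b \<and> b < length xs \<and> permute_list p xs ! b < permute_list p xs ! a}"
    using p by (auto simp: permute_list_nth)
  then show ?thesis unfolding inversions_def inversion_count_card by simp
qed

lemma Svec_eq_qwedge:
  assumes "sorted_wrt (<) is"
  shows "Svec q is = qwedge q (set is)"
proof
  fix js
  let ?P = "{p. p permutes {..<length is}}"
  have "Svec q is js = (\<Sum>p\<in>?P. (- mu q) ^ inversion_count (permute_list p is)
                               * (if js = permute_list p is then 1 else 0))"
    unfolding Svec_def permute_list_def[symmetric] using assms
    by (intro sum.cong) (simp_all add: inversions_eq_inversion_count)
  also have "\<dots> = (\<Sum>ys\<in>permutations_of_set (set is).
                     (- mu q) ^ inversion_count ys * (if js = ys then 1 else 0))"
    using assms by (intro sum.reindex_bij_betw bij_betw_permute_list) (simp add: strict_sorted_iff)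
  also have "\<dots> = qwedge q (set is) js"
    by (simp add: qwedge_def if_distrib[of "\<lambda>x. _ * x"] cong: if_cong)
  finally show "Svec q is js = qwedge q (set is) js" .
qed

lemma sum_permutations_of_set_Cons:
  assumes "finite A" "A \<noteq> {}"
  shows "(\<Sum>xs\<in>permutations_of_set A. f xs)
           = (\<Sum>a\<in>A. \<Sum>xs\<in>permutations_of_set (A - {a}). f (a # xs))"
proof -
  have "(\<Sum>xs\<in>permutations_of_set A. f xs)
          = (\<Sum>a\<in>A. \<Sum>xs\<in>(#) a ` permutations_of_set (A - {a}). f xs)"
    unfolding permutations_of_set_nonempty[OF assms(2)]
    using assms(1) by (intro sum.UNION_disjoint) auto
  also have "\<dots> = (\<Sum>a\<in>A. \<Sum>xs\<in>permutations_of_set (A - {a}). f (a # xs))"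
    by (simp add: sum.reindex inj_on_def)
  finally show ?thesis .
qed

lemma sum_permutations_of_set_snoc:
  assumes "finite A" "A \<noteq> {}"
  shows "(\<Sum>xs\<in>permutations_of_set A. f xs)
           = (\<Sum>a\<in>A. \<Sum>xs\<in>permutations_of_set (A - {a}). f (xs @ [a]))"
proof -
  have rev: "(\<Sum>xs\<in>permutations_of_set B. g (rev xs)) = (\<Sum>xs\<in>permutations_of_set B. g xs)"
    for B and g :: "'a list \<Rightarrow> 'b"
    by (subst (2) rev_permutations_of_set[symmetric], subst sum.reindex) (auto intro: inj_onI)
  have "(\<Sum>xs\<in>permutations_of_set A. f xs) = (\<Sum>xs\<in>permutations_of_set A. f (rev xs))"
    by (rule rev[symmetric])
  also have "\<dots> = (\<Sum>a\<in>A. \<Sum>xs\<in>permutations_of_set (A - {a}). f (rev xs @ [a]))"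
    using sum_permutations_of_set_Cons[OF assms, of "\<lambda>xs. f (rev xs)"] by simp
  also have "\<dots> = (\<Sum>a\<in>A. \<Sum>xs\<in>permutations_of_set (A - {a}). f (xs @ [a]))"
    using rev[where g = "\<lambda>xs. f (xs @ [_])"] by simp
  finally show ?thesis .
qed

lemma sum_if_unique:
  assumes "finite A" "\<And>a b. a \<in> A \<Longrightarrow> b \<in> A \<Longrightarrow> P a \<Longrightarrow> P b \<Longrightarrow> a = b"
    and "z \<noteq> 0 \<Longrightarrow> \<exists>a\<in>A. P a"
  shows "(\<Sum>a\<in>A. if P a then z else 0) = z"
proof (cases "\<exists>a\<in>A. P a")
  case True
  then obtain a where a: "a \<in> A" "P a" by blast
  then have "(\<Sum>b\<in>A. if P b then z else 0) = (\<Sum>b\<in>A. if b = a then z else 0)"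
    using assms(2) by (intro sum.cong) auto
  with a assms(1) show ?thesis by simp
qed (use assms(3) in auto)

lemma sum_rank:
  fixes A :: "'a::linorder set"
  assumes "finite A"
  shows "(\<Sum>x\<in>A. f (card {y\<in>A. y < x})) = (\<Sum>k<card A. f k)"
  using assms
proof (induction "card A" arbitrary: A)
  case (Suc m)
  define M where "M = Max A"
  define B where "B = A - {M}"
  have M: "M \<in> A" using Suc M_def by (metis Max_in card_0_eq nat.distinct(1))
  have B: "card B = m" "finite B" using Suc.hyps(2) Suc.prems M by (auto simp: B_def)
  have "{y\<in>A. y < M} = B"
    using Suc.prems by (auto simp: B_def M_def order.not_eq_order_implies_strict)
  moreover have "{y\<in>A. y < x} = {y\<in>B. y < x}" if "x \<in> B" for x
    using that Suc.prems by (auto simp: B_def M_def dest: Max_ge[OF Suc.prems])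
  ultimately have "(\<Sum>x\<in>A. f (card {y\<in>A. y < x})) = f m + (\<Sum>x\<in>B. f (card {y\<in>B. y < x}))"
    using Suc.prems M B by (simp add: B_def sum.remove)
  also have "\<dots> = (\<Sum>k<Suc m. f k)"
    using Suc.hyps(1)[OF B(1)[symmetric] B(2)] B(1) by (simp add: add.commute)
  finally show ?case using Suc.hyps(2) by simp
qed simp

theorem sum_q_inversions:
  fixes A :: "'a::linorder set"
  assumes "finite A"
  shows "(\<Sum>xs\<in>permutations_of_set A. q ^ inversion_count xs) = qfact q (card A)"
  using assms
proof (induction "card A" arbitrary: A)
  case 0
  then show ?case by (simp add: qfact_def)
next
  case (Suc m)
  then have A: "A \<noteq> {}" by auto
  have inner: "(\<Sum>xs\<in>permutations_of_set (A - {a}). q ^ inversion_count (a # xs))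
                 = q ^ card {y\<in>A. y < a} * qfact q m" if a: "a \<in> A" for a
  proof -
    have "length (filter (\<lambda>y. y < a) xs) = card {y\<in>A. y < a}"
      if "xs \<in> permutations_of_set (A - {a})" for xs
      using that a by (auto simp: permutations_of_set_def distinct_length_filter
                           intro: arg_cong[where f = card])
    then have "(\<Sum>xs\<in>permutations_of_set (A - {a}). q ^ inversion_count (a # xs))
          = (\<Sum>xs\<in>permutations_of_set (A - {a}). q ^ card {y\<in>A. y < a} * q ^ inversion_count xs)"
      by (intro sum.cong) (simp_all add: power_add)
    also have "\<dots> = q ^ card {y\<in>A. y < a} * qfact q m"
    proof -
      have "card (A - {a}) = m" using Suc.hyps(2) Suc.prems a by simp
      then show ?thesis using Suc.hyps(1)[of "A - {a}"] Suc.prems by (simp flip: sum_distrib_left)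
    qed
    finally show ?thesis .
  qed
  have "(\<Sum>xs\<in>permutations_of_set A. q ^ inversion_count xs)
          = (\<Sum>a\<in>A. q ^ card {y\<in>A. y < a}) * qfact q m"
    by (simp add: sum_permutations_of_set_Cons[OF Suc.prems A] inner sum_distrib_right
             del: inversion_count.simps)
  also have "\<dots> = qfact q (Suc m)"
    using sum_rank[OF Suc.prems, of "\<lambda>k. q ^ k"] Suc.hyps(2)[symmetric]
    by (simp add: qfact_Suc mult.commute)
  finally show ?case using Suc.hyps(2) by simp
qed

section \<open>q-antisymmetric tensors\<close>

lemma not_sorted_wrt_less_adjacent:
  fixes xs :: "'a::linorder list"
  assumes "\<not> sorted_wrt (<) xs"
  obtains as a b bs where "xs = as @ a # b # bs" "b \<le> a"
  using assms
proof (induction xs arbitrary: thesis)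
  case (Cons x xs)
  show ?case
  proof (cases "sorted_wrt (<) xs")
    case False
    then show ?thesis using Cons.IH[of "thesis"] Cons.prems(1)[of "x # _"] by fastforce
  next
    case True
    with Cons.prems(2) obtain y zs where "xs = y # zs" "y \<le> x"
      by (cases xs) (auto simp: not_less intro: order_trans)
    then show ?thesis using Cons.prems(1)[of "[]"] by simp
  qed
qed simp

lemma q_antisym_repeated:
  assumes q: "q > 0" and y: "q_antisym q y"
  shows "y (as @ a # a # bs) = 0"
proof -
  let ?ks = "as @ a # a # bs"
  have h: "- y ?ks = q * y ?ks"
    using y gop_equal[of q as y a bs] unfolding q_antisym_def by simp
  have "(complex_of_real q + 1) * y ?ks = q * y ?ks + y ?ks"
    by (simp add: algebra_simps)
  also have "\<dots> = 0"
    unfolding h[symmetric] by simp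
  finally have "(complex_of_real q + 1) * y ?ks = 0" .
  moreover have "complex_of_real q + 1 \<noteq> 0"
    using q by (metis of_real_1 of_real_add of_real_eq_0_iff add_pos_pos zero_less_one less_irrefl)
  ultimately show ?thesis by simp
qed

lemma q_antisym_swap:
  assumes q: "q > 0" and y: "q_antisym q y" and ba: "b < a"
  shows "y (as @ a # b # bs) = - mu q * y (as @ b # a # bs)"
proof -
  have "gop q (Suc (length as)) y (as @ b # a # bs) = q * y (as @ b # a # bs)"
    using y unfolding q_antisym_def by simp
  then have "- mu q * y (as @ a # b # bs) = mu q * mu q * y (as @ b # a # bs)"
    using gop_less[OF ba] mu_mult_self q by simp
  then have "mu q * y (as @ a # b # bs) = mu q * (- mu q * y (as @ b # a # bs))"
    by (simp add: algebra_simps minus_equation_iff[of "mu q * y (as @ a # b # bs)"])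
  moreover have "mu q \<noteq> 0"
    using q by (simp add: mu_def)
  ultimately show ?thesis
    by (metis mult_left_cancel)
qed

lemma q_antisym_normal_form:
  assumes q: "q > 0" and y: "q_antisym q y"
  shows "y ks = (if distinct ks then (- mu q) ^ inversion_count ks * y (sorted_list_of_set (set ks))
                 else 0)"
proof (induction "inversion_count ks" arbitrary: ks rule: less_induct)
  case less
  show ?case
  proof (cases "sorted_wrt (<) ks")
    case True
    then show ?thesis
      by (simp add: strict_sorted_iff inversion_count_sorted
                    sorted_list_of_set.idem_if_sorted_distinct)
  next
    case False
    then obtain as a b bs where ks: "ks = as @ a # b # bs" "b \<le> a"
      by (rule not_sorted_wrt_less_adjacent)
    show ?thesis
    proof (cases "b = a")
      case True
      with ks show ?thesis using q_antisym_repeated[OF q y] by simp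
    next
      case False
      with ks have ba: "b < a" by simp
      define ks' where "ks' = as @ b # a # bs"
      have "y ks = - mu q * y ks'"
        unfolding ks ks'_def by (rule q_antisym_swap[OF q y ba])
      moreover have "inversion_count ks = Suc (inversion_count ks')"
        unfolding ks ks'_def by (rule inversion_count_swap[OF ba])
      moreover have "distinct ks' = distinct ks" "set ks' = set ks"
        unfolding ks ks'_def by auto
      ultimately show ?thesis using less[of ks'] by simp
    qed
  qed
qed

lemma q_antisym_not_distinct: "q > 0 \<Longrightarrow> q_antisym q y \<Longrightarrow> \<not> distinct ks \<Longrightarrow> y ks = 0"
  using q_antisym_normal_form[of q y ks] by simp

lemma q_antisym_reorder:
  assumes "q > 0" "q_antisym q y" "distinct \<sigma>" "distinct \<tau>" "set \<sigma> = set \<tau>"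
  shows "(- mu q) ^ inversion_count \<sigma> * y \<tau> = (- mu q) ^ inversion_count \<tau> * y \<sigma>"
  using assms(3-5) q_antisym_normal_form[OF assms(1,2), of \<sigma>]
    q_antisym_normal_form[OF assms(1,2), of \<tau>]
  by (simp add: mult.left_commute)

lemma q_antisym_append: "q_antisym q y \<Longrightarrow> q_antisym q (\<lambda>\<sigma>. y (\<sigma> @ ks))"
  unfolding q_antisym_def by (simp add: gop_append)

lemma q_antisym_Cons: "q_antisym q y \<Longrightarrow> q_antisym q (\<lambda>\<sigma>. y (k # \<sigma>))"
  unfolding q_antisym_def by (simp add: gop_Cons)

lemma qwedge_tpow_sub: "finite I \<Longrightarrow> qwedge q I \<in> tpow_sub I (card I)"
  unfolding tpow_sub_def qwedge_def
  by (auto simp: length_finite_permutations_of_set permutations_of_set_def)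

lemma cnj_qwedge [simp]: "cnj (qwedge q I js) = qwedge q I js"
  by (simp add: qwedge_def mu_def)

lemma qwedge_q_antisym:
  assumes q: "q \<ge> 0"
  shows "q_antisym q (qwedge q I)"
  unfolding q_antisym_def
proof (intro allI impI)
  fix j js assume "1 \<le> j" "j < length (js :: nat list)"
  then obtain xs a b ys where js: "js = xs @ a # b # ys" "j = Suc (length xs)"
    by (rule split_at_position)
  have m: "complex_of_real q = mu q * mu q" "complex_of_real (q - 1) = mu q * mu q - 1"
    using mu_mult_self[OF q] by simp_all
  have swap: "xs @ b # a # ys \<in> permutations_of_set I \<longleftrightarrow> xs @ a # b # ys \<in> permutations_of_set I"
    by (auto simp: permutations_of_set_def insert_commute)
  show "gop q j (qwedge q I) js = q * qwedge q I js"
  proof (cases rule: linorder_cases[of a b])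
    case less
    with swap m js show ?thesis
      using inversion_count_swap[OF less, of xs ys] by (simp add: gop_less qwedge_def algebra_simps)
  next
    case equal
    with js show ?thesis
      by (simp add: gop_equal qwedge_def permutations_of_set_def)
  next
    case greater
    with swap m js show ?thesis
      using inversion_count_swap[OF greater, of xs ys] by (simp add: gop_greater qwedge_def algebra_simps)
  qed
qed

lemma qwedge_Cons_snoc:
  assumes "a \<notin> J" "\<sigma> \<in> permutations_of_set J" "\<tau> \<in> permutations_of_set J"
  shows "qwedge q (insert a J) (a # \<sigma>) * qwedge q (insert a J) (\<tau> @ [a])
           = (- mu q) ^ length \<tau> * (- mu q) ^ inversion_count \<sigma> * (- mu q) ^ inversion_count \<tau>"
proof -
  have \<sigma>: "set \<sigma> = J" "distinct \<sigma>" and \<tau>: "set \<tau> = J" "distinct \<tau>"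
    using assms(2,3) by (auto simp: permutations_of_set_def)
  have "length (filter (\<lambda>y. y < a) \<sigma>) = length (filter (\<lambda>y. y < a) \<tau>)"
    using \<sigma> \<tau> by (simp add: distinct_length_filter)
  moreover have "filter (\<lambda>y. \<not> y < a) \<tau> = filter (\<lambda>y. a < y) \<tau>"
    using assms(1) \<tau> by (intro filter_cong) (auto simp: not_less order_le_less)
  then have "length (filter (\<lambda>y. y < a) \<tau>) + length (filter (\<lambda>y. a < y) \<tau>) = length \<tau>"
    using sum_length_filter_compl[of "\<lambda>y. y < a" \<tau>] by simp
  ultimately have inv: "inversion_count (a # \<sigma>) + inversion_count (\<tau> @ [a])
                         = length \<tau> + inversion_count \<sigma> + inversion_count \<tau>"
    by (simp add: inversion_count_snoc)
  have "a # \<sigma> \<in> permutations_of_set (insert a J)" "\<tau> @ [a] \<in> permutations_of_set (insert a J)"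
    using assms \<sigma> \<tau> by (auto simp: permutations_of_set_def)
  then have "qwedge q (insert a J) (a # \<sigma>) * qwedge q (insert a J) (\<tau> @ [a])
               = (- mu q) ^ (inversion_count (a # \<sigma>) + inversion_count (\<tau> @ [a]))"
    unfolding qwedge_def by (simp only: if_True power_add)
  then show ?thesis
    unfolding inv by (simp add: power_add)
qed

section \<open>The conjugate equations\<close>

definition psi :: "nat \<Rightarrow> tvec" where
  "psi k js = (if js = [k] then 1 else 0)"

lemma psi_tpow_sub: "k \<in> I \<Longrightarrow> psi k \<in> tpow_sub I 1"
  unfolding tpow_sub_def psi_def by auto

lemma expand_last_factor:
  assumes v: "v \<in> tpow_sub I L" and I: "finite I" and L: "1 \<le> L"
  shows "v = (\<lambda>js. \<Sum>k\<in>I. tens (L - 1) (\<lambda>\<sigma>. v (\<sigma> @ [k])) (psi k) js)"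
proof
  fix js
  have "tens (L - 1) (\<lambda>\<sigma>. v (\<sigma> @ [k])) (psi k) js = (if drop (L - 1) js = [k] then v js else 0)"
    for k
  proof (cases "drop (L - 1) js = [k]")
    case True
    then have "take (L - 1) js @ [k] = js" by (metis append_take_drop_id)
    with True show ?thesis by (simp add: tens_def psi_def)
  qed (simp add: tens_def psi_def)
  then have "(\<Sum>k\<in>I. tens (L - 1) (\<lambda>\<sigma>. v (\<sigma> @ [k])) (psi k) js)
               = (\<Sum>k\<in>I. if drop (L - 1) js = [k] then v js else 0)"
    by simp
  also have "\<dots> = v js"
  proof (rule sum_if_unique[OF I])
    assume "v js \<noteq> 0"
    with v have len: "length js = L" and "set js \<subseteq> I" unfolding tpow_sub_def by auto
    moreover from len L have "js \<noteq> []" by auto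
    then have "js = butlast js @ [last js]" "length (butlast js) = L - 1"
      using len by simp_all
    then have "drop (L - 1) js = [last js]"
      by (metis append_eq_conv_conj)
    ultimately show "\<exists>k\<in>I. drop (L - 1) js = [k]"
      using last_in_set[OF \<open>js \<noteq> []\<close>] by (intro bexI[of _ "last js"]) auto
  qed simp
  finally show "v js = (\<Sum>k\<in>I. tens (L - 1) (\<lambda>\<sigma>. v (\<sigma> @ [k])) (psi k) js)" ..
qed

lemma expand_first_factor:
  assumes v: "v \<in> tpow_sub I L" and I: "finite I" and L: "1 \<le> L"
  shows "v = (\<lambda>js. \<Sum>k\<in>I. tens 1 (psi k) (\<lambda>\<sigma>. v (k # \<sigma>)) js)"
proof
  fix js
  have "tens 1 (psi k) (\<lambda>\<sigma>. v (k # \<sigma>)) js = (if take 1 js = [k] then v js else 0)" for k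
    by (cases js) (auto simp: tens_def psi_def)
  then have "(\<Sum>k\<in>I. tens 1 (psi k) (\<lambda>\<sigma>. v (k # \<sigma>)) js)
               = (\<Sum>k\<in>I. if take 1 js = [k] then v js else 0)"
    by simp
  also have "\<dots> = v js"
  proof (rule sum_if_unique[OF I])
    assume "v js \<noteq> 0"
    with v have "length js = L" "set js \<subseteq> I" unfolding tpow_sub_def by auto
    with L show "\<exists>k\<in>I. take 1 js = [k]" by (cases js) auto
  qed simp
  finally show "v js = (\<Sum>k\<in>I. tens 1 (psi k) (\<lambda>\<sigma>. v (k # \<sigma>)) js)" ..
qed

lemma cspan_sum:
  assumes "finite K" "\<And>k. k \<in> K \<Longrightarrow> f k \<in> S"
  shows "(\<lambda>js. \<Sum>k\<in>K. c k * f k js) \<in> cspan S"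
proof -
  define c' where "c' v = (\<Sum>k\<in>{k\<in>K. f k = v}. c k)" for v
  have "(\<lambda>js. \<Sum>k\<in>K. c k * f k js) = (\<lambda>js. \<Sum>v\<in>f ` K. c' v * v js)"
  proof
    fix js
    have "(\<Sum>k\<in>K. c k * f k js) = (\<Sum>v\<in>f ` K. \<Sum>k\<in>{k\<in>K. f k = v}. c k * f k js)"
      using assms(1) by (rule sum.image_gen)
    also have "\<dots> = (\<Sum>v\<in>f ` K. c' v * v js)"
      unfolding c'_def sum_distrib_right by (intro sum.cong) auto
    finally show "(\<Sum>k\<in>K. c k * f k js) = (\<Sum>v\<in>f ` K. c' v * v js)" .
  qed
  with assms show ?thesis unfolding cspan_def by blast
qed

lemma qwedge_mem_tens_sub_last:
  assumes "q \<ge> 0" "finite I" "1 \<le> card I"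
  shows "(\<lambda>js. c * qwedge q I js)
           \<in> tens_sub (card I - 1) {y \<in> tpow_sub I (card I - 1). q_antisym q y} (tpow_sub I 1)"
proof -
  let ?y = "\<lambda>k \<sigma>. qwedge q I (\<sigma> @ [k])"
  have "(\<lambda>js. c * qwedge q I js) = (\<lambda>js. \<Sum>k\<in>I. c * tens (card I - 1) (?y k) (psi k) js)"
    by (subst expand_last_factor[OF qwedge_tpow_sub[OF assms(2)] assms(2,3)])
       (simp add: sum_distrib_left)
  also have "\<dots> \<in> tens_sub (card I - 1) {y \<in> tpow_sub I (card I - 1). q_antisym q y} (tpow_sub I 1)"
    unfolding tens_sub_def
  proof (rule cspan_sum[OF assms(2)])
    fix k assume "k \<in> I"
    moreover have "?y k \<in> tpow_sub I (card I - 1)"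
      using tpow_sub_append[OF qwedge_tpow_sub[OF assms(2)], where ks = "[k]"] by simp
    moreover have "q_antisym q (?y k)"
      using q_antisym_append[OF qwedge_q_antisym[OF assms(1)]] .
    ultimately show "tens (card I - 1) (?y k) (psi k) \<in> {tens (card I - 1) v w |v w.
        v \<in> {y \<in> tpow_sub I (card I - 1). q_antisym q y} \<and> w \<in> tpow_sub I 1}"
      using psi_tpow_sub by blast
  qed
  finally show ?thesis .
qed

lemma qwedge_mem_tens_sub_first:
  assumes "q \<ge> 0" "finite I" "1 \<le> card I"
  shows "(\<lambda>js. c * qwedge q I js)
           \<in> tens_sub 1 (tpow_sub I 1) {y \<in> tpow_sub I (card I - 1). q_antisym q y}"
proof -
  let ?y = "\<lambda>k \<sigma>. qwedge q I (k # \<sigma>)"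
  have "(\<lambda>js. c * qwedge q I js) = (\<lambda>js. \<Sum>k\<in>I. c * tens 1 (psi k) (?y k) js)"
    by (subst expand_first_factor[OF qwedge_tpow_sub[OF assms(2)] assms(2,3)])
       (simp add: sum_distrib_left)
  also have "\<dots> \<in> tens_sub 1 (tpow_sub I 1) {y \<in> tpow_sub I (card I - 1). q_antisym q y}"
    unfolding tens_sub_def
  proof (rule cspan_sum[OF assms(2)])
    fix k assume "k \<in> I"
    moreover have "?y k \<in> tpow_sub I (card I - 1)"
      by (rule tpow_sub_Cons[OF qwedge_tpow_sub[OF assms(2)]])
    moreover have "q_antisym q (?y k)"
      using q_antisym_Cons[OF qwedge_q_antisym[OF assms(1)]] .
    ultimately show "tens 1 (psi k) (?y k) \<in> {tens 1 v w |v w.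
        v \<in> tpow_sub I 1 \<and> w \<in> {y \<in> tpow_sub I (card I - 1). q_antisym q y}}"
      using psi_tpow_sub by blast
  qed
  finally show ?thesis .
qed

lemma contract_scale_tens:
  "contract d n (\<lambda>js. a * X js) (tens k x (\<lambda>js. b * Y js))
     = (\<lambda>ks. cnj a * b * contract d n X (tens k x Y) ks)"
  unfolding contract_def tens_def by (simp add: sum_distrib_left mult_ac)

lemma sum_words_qwedge:
  assumes "I \<subseteq> {1..d}" "card I = n"
  shows "(\<Sum>js\<in>words d n. qwedge q I js * f js) = (\<Sum>js\<in>permutations_of_set I. qwedge q I js * f js)"
proof (rule sum.mono_neutral_right)
  show "finite (words d n)"
    unfolding words_def by (rule finite_subset[OF _ finite_lists_length_eq[of "{1..d}" n]]) auto
  show "permutations_of_set I \<subseteq> words d n"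
    using assms length_finite_permutations_of_set
    by (fastforce simp: words_def permutations_of_set_def)
  show "\<forall>js\<in>words d n - permutations_of_set I. qwedge q I js * f js = 0"
    by (simp add: qwedge_def)
qed

lemma append_permutations_of_set_iff:
  assumes "a \<in> I" "\<tau> \<in> permutations_of_set (I - {a})"
  shows "\<tau> @ ks \<in> permutations_of_set I \<longleftrightarrow> ks = [a]"
proof
  assume "\<tau> @ ks \<in> permutations_of_set I"
  with assms have "set ks = {a}" "distinct ks" by (auto simp: permutations_of_set_def)
  then show "ks = [a]"
    by (metis distinct.simps(2) distinct_singleton insert_not_empty list.set(1) list.set(2)
              empty_iff insert_iff list.exhaust set_ConsD singletonD)
qed (use assms in \<open>auto simp: permutations_of_set_def\<close>)

lemma sum_qwedge_Cons_snoc: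
  assumes q: "q \<ge> 0" and I: "finite I" "a \<in> I"
  shows "(\<Sum>\<tau>\<in>permutations_of_set (I - {a}). qwedge q I (a # \<tau>) * qwedge q I (\<tau> @ [a]))
           = (- mu q) ^ (card I - 1) * qfact q (card I - 1)"
proof -
  have "qwedge q I (a # \<tau>) * qwedge q I (\<tau> @ [a]) = (- mu q) ^ (card I - 1) * q ^ inversion_count \<tau>"
    if \<tau>: "\<tau> \<in> permutations_of_set (I - {a})" for \<tau>
  proof -
    have "length \<tau> = card I - 1"
      using \<tau> I by (simp add: length_finite_permutations_of_set)
    then show ?thesis
      using qwedge_Cons_snoc[of a "I - {a}" \<tau> \<tau> q] \<tau> I q
      by (simp add: insert_absorb mult.assoc neg_mu_power_square)
  qed
  then have "(\<Sum>\<tau>\<in>permutations_of_set (I - {a}). qwedge q I (a # \<tau>) * qwedge q I (\<tau> @ [a]))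
      = (- mu q) ^ (card I - 1) * (\<Sum>\<tau>\<in>permutations_of_set (I - {a}). q ^ inversion_count \<tau>)"
    by (simp add: sum_distrib_left)
  also have "\<dots> = (- mu q) ^ (card I - 1) * qfact q (card I - 1)"
    using sum_q_inversions[of "I - {a}" q] I by simp
  finally show ?thesis .
qed

lemma sum_qwedge_snoc_Cons:
  assumes q: "q > 0" and y: "q_antisym q y" and I: "finite I" "l \<in> I"
    and \<sigma>: "\<sigma> \<in> permutations_of_set (I - {l})"
  shows "(\<Sum>\<tau>\<in>permutations_of_set (I - {l}). qwedge q I (\<tau> @ [l]) * (y \<tau> * qwedge q I (l # \<sigma>)))
           = (- mu q) ^ (card I - 1) * qfact q (card I - 1) * y \<sigma>"
proof -
  have "qwedge q I (\<tau> @ [l]) * (y \<tau> * qwedge q I (l # \<sigma>))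
          = (- mu q) ^ (card I - 1) * y \<sigma> * q ^ inversion_count \<tau>"
    if \<tau>: "\<tau> \<in> permutations_of_set (I - {l})" for \<tau>
  proof -
    have "length \<tau> = card I - 1"
      using \<tau> I by (simp add: length_finite_permutations_of_set)
    then have "qwedge q I (l # \<sigma>) * qwedge q I (\<tau> @ [l])
        = (- mu q) ^ (card I - 1) * (- mu q) ^ inversion_count \<sigma> * (- mu q) ^ inversion_count \<tau>"
      using qwedge_Cons_snoc[of l "I - {l}" \<sigma> \<tau> q] \<sigma> \<tau> I by (simp add: insert_absorb)
    moreover have "(- mu q) ^ inversion_count \<sigma> * y \<tau> = (- mu q) ^ inversion_count \<tau> * y \<sigma>"
      using \<sigma> \<tau> by (intro q_antisym_reorder[OF q y]) (auto simp: permutations_of_set_def)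
    ultimately have "qwedge q I (\<tau> @ [l]) * (y \<tau> * qwedge q I (l # \<sigma>))
        = (- mu q) ^ (card I - 1) * ((- mu q) ^ inversion_count \<tau> * (- mu q) ^ inversion_count \<tau>)
            * y \<sigma>"
      by (simp add: mult_ac)
    then show ?thesis
      using q by (simp add: neg_mu_power_square mult_ac)
  qed
  then have "(\<Sum>\<tau>\<in>permutations_of_set (I - {l}). qwedge q I (\<tau> @ [l]) * (y \<tau> * qwedge q I (l # \<sigma>)))
      = (- mu q) ^ (card I - 1) * y \<sigma> * (\<Sum>\<tau>\<in>permutations_of_set (I - {l}). q ^ inversion_count \<tau>)"
    by (simp add: sum_distrib_left)
  also have "\<dots> = (- mu q) ^ (card I - 1) * qfact q (card I - 1) * y \<sigma>"
    using sum_q_inversions[of "I - {l}" q] I by simp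
  finally show ?thesis .
qed

lemma q_antisym_support:
  assumes q: "q > 0" and y: "y \<in> tpow_sub I (card I - 1)" "q_antisym q y"
    and I: "finite I" "1 \<le> card I" and nz: "y ks \<noteq> 0"
  shows "\<exists>l\<in>I. ks \<in> permutations_of_set (I - {l})"
proof -
  have ks: "length ks = card I - 1" "set ks \<subseteq> I" "distinct ks"
    using nz y q_antisym_not_distinct[OF q y(2)] unfolding tpow_sub_def by auto
  then have "card (I - set ks) = 1"
    using I by (simp add: card_Diff_subset distinct_card)
  then obtain l where "I - set ks = {l}" by (rule card_1_singletonE)
  with ks have "l \<in> I" "set ks = I - {l}" by auto
  with ks show ?thesis by (auto simp: permutations_of_set_def)
qed

lemma contract_qwedge_first:
  assumes q: "q > 0" and I: "I \<subseteq> {1..d}" "card I = n" "1 \<le> n" and x: "x \<in> tpow_sub I 1"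
  shows "contract d n (qwedge q I) (tens 1 x (qwedge q I))
           = (\<lambda>ks. (- mu q) ^ (n - 1) * qfact q (n - 1) * x ks)"
proof
  fix ks
  have fin: "finite I" using I(1) finite_subset by blast
  let ?c = "(- mu q) ^ (n - 1) * complex_of_real (qfact q (n - 1))"
  have inner: "(\<Sum>\<tau>\<in>permutations_of_set (I - {a}).
                   qwedge q I (a # \<tau>) * (x [a] * qwedge q I (\<tau> @ ks)))
                = (if ks = [a] then ?c * x ks else 0)" if a: "a \<in> I" for a
  proof (cases "ks = [a]")
    case True
    have "(\<Sum>\<tau>\<in>permutations_of_set (I - {a}). qwedge q I (a # \<tau>) * (x [a] * qwedge q I (\<tau> @ ks)))
        = x ks * (\<Sum>\<tau>\<in>permutations_of_set (I - {a}). qwedge q I (a # \<tau>) * qwedge q I (\<tau> @ [a]))"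
      unfolding True sum_distrib_left by (simp add: mult_ac)
    with True show ?thesis
      using sum_qwedge_Cons_snoc[of q I a] q fin a I(2) by (simp add: mult_ac)
  next
    case False
    with a show ?thesis by (simp add: qwedge_def append_permutations_of_set_iff)
  qed
  have "contract d n (qwedge q I) (tens 1 x (qwedge q I)) ks
      = (\<Sum>js\<in>words d n. qwedge q I js * (x (take 1 js) * qwedge q I (drop 1 js @ ks)))"
    unfolding contract_def tens_def using I(3) by (intro sum.cong) (auto simp: words_def)
  also have "\<dots> = (\<Sum>js\<in>permutations_of_set I.
                     qwedge q I js * (x (take 1 js) * qwedge q I (drop 1 js @ ks)))"
    by (rule sum_words_qwedge[OF I(1,2)])
  also have "\<dots> = (\<Sum>a\<in>I. \<Sum>\<tau>\<in>permutations_of_set (I - {a}).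
                     qwedge q I (a # \<tau>) * (x [a] * qwedge q I (\<tau> @ ks)))"
    using I by (subst sum_permutations_of_set_Cons[OF fin]) auto
  also have "\<dots> = (\<Sum>a\<in>I. if ks = [a] then ?c * x ks else 0)"
    using inner by simp
  also have "\<dots> = ?c * x ks"
    by (rule sum_if_unique[OF fin]) (use x in \<open>auto simp: tpow_sub_def length_Suc_conv\<close>)
  finally show "contract d n (qwedge q I) (tens 1 x (qwedge q I)) ks = ?c * x ks" .
qed

lemma contract_qwedge_second:
  assumes q: "q > 0" and I: "I \<subseteq> {1..d}" "card I = n" "1 \<le> n"
    and y: "y \<in> tpow_sub I (n - 1)" "q_antisym q y"
  shows "contract d n (qwedge q I) (tens (n - 1) y (qwedge q I))
           = (\<lambda>ks. (- mu q) ^ (n - 1) * qfact q (n - 1) * y ks)"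
proof
  fix ks
  have fin: "finite I" using I(1) finite_subset by blast
  let ?c = "(- mu q) ^ (n - 1) * complex_of_real (qfact q (n - 1))"
  have len: "length \<tau> = n - 1" if "\<tau> \<in> permutations_of_set (I - {l})" "l \<in> I" for \<tau> l
    using that fin I(2) by (simp add: length_finite_permutations_of_set)
  have inner: "(\<Sum>\<tau>\<in>permutations_of_set (I - {l}).
                   qwedge q I (\<tau> @ [l]) * (y \<tau> * qwedge q I (l # ks)))
                = (if ks \<in> permutations_of_set (I - {l}) then ?c * y ks else 0)" if l: "l \<in> I" for l
  proof (cases "ks \<in> permutations_of_set (I - {l})")
    case True
    then show ?thesis using sum_qwedge_snoc_Cons[OF q y(2) fin l True] I(2) by simp
  next
    case False
    with l have "l # ks \<notin> permutations_of_set I"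
      by (auto simp: permutations_of_set_def)
    with False show ?thesis by (simp add: qwedge_def)
  qed
  have "contract d n (qwedge q I) (tens (n - 1) y (qwedge q I)) ks
      = (\<Sum>js\<in>words d n. qwedge q I js * (y (take (n - 1) js) * qwedge q I (drop (n - 1) js @ ks)))"
    unfolding contract_def tens_def by (intro sum.cong) (auto simp: words_def)
  also have "\<dots> = (\<Sum>js\<in>permutations_of_set I.
                     qwedge q I js * (y (take (n - 1) js) * qwedge q I (drop (n - 1) js @ ks)))"
    by (rule sum_words_qwedge[OF I(1,2)])
  also have "\<dots> = (\<Sum>l\<in>I. \<Sum>\<tau>\<in>permutations_of_set (I - {l}).
                     qwedge q I (\<tau> @ [l]) * (y \<tau> * qwedge q I (l # ks)))"
    using I len by (subst sum_permutations_of_set_snoc[OF fin]) auto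
  also have "\<dots> = (\<Sum>l\<in>I. if ks \<in> permutations_of_set (I - {l}) then ?c * y ks else 0)"
    using inner by simp
  also have "\<dots> = ?c * y ks"
  proof (rule sum_if_unique[OF fin])
    show "a = b" if "a \<in> I" "b \<in> I" "ks \<in> permutations_of_set (I - {a})"
      "ks \<in> permutations_of_set (I - {b})" for a b
      using that by (auto simp: permutations_of_set_def)
    show "\<exists>l\<in>I. ks \<in> permutations_of_set (I - {l})" if "?c * y ks \<noteq> 0"
      using that q_antisym_support[OF q _ y(2) fin] y(1) I(2,3) by auto
  qed
  finally show "contract d n (qwedge q I) (tens (n - 1) y (qwedge q I)) ks = ?c * y ks" .
qed

definition R_scale :: "real \<Rightarrow> nat \<Rightarrow> complex" where
  "R_scale q n =
     inverse (complex_of_real (sqrt q powr ((real n - 1) / 2) * sqrt (qfact q (n - 1))))"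

lemma R_scale_normalization:
  assumes q: "q > 0" and n: "1 \<le> n"
  shows "cnj ((-1) ^ (n - 1) * R_scale q n) * R_scale q n * ((- mu q) ^ (n - 1) * qfact q (n - 1))
           = 1"
proof -
  define c where "c = sqrt q powr ((real n - 1) / 2) * sqrt (qfact q (n - 1))"
  have e: "(real n - 1) / 2 + (real n - 1) / 2 = real (n - 1)"
    using n by (simp add: of_nat_diff)
  have "sqrt q powr ((real n - 1) / 2) * sqrt q powr ((real n - 1) / 2) = sqrt q powr real (n - 1)"
    unfolding powr_add[symmetric] e ..
  also have "\<dots> = sqrt q ^ (n - 1)"
    using q by (intro powr_realpow) simp
  finally have "c * c = sqrt q ^ (n - 1) * (sqrt (qfact q (n - 1)) * sqrt (qfact q (n - 1)))"
    unfolding c_def by (simp only: mult_ac)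
  also have "\<dots> = sqrt q ^ (n - 1) * qfact q (n - 1)"
    using qfact_pos[OF q, of "n - 1"] by simp
  finally have cc: "c * c = sqrt q ^ (n - 1) * qfact q (n - 1)" .
  have "c \<noteq> 0"
    using cc q qfact_pos[OF q, of "n - 1"] by auto
  have sign: "(-1) ^ (n - 1) * (- sqrt q) ^ (n - 1) = sqrt q ^ (n - 1)"
    by (simp add: power_mult_distrib[symmetric])
  have "(-1) ^ (n - 1) * inverse c * inverse c * ((- sqrt q) ^ (n - 1) * qfact q (n - 1))
          = inverse c * inverse c * ((-1) ^ (n - 1) * (- sqrt q) ^ (n - 1) * qfact q (n - 1))"
    by (simp only: mult_ac)
  also have "\<dots> = 1"
    unfolding sign cc[symmetric] using \<open>c \<noteq> 0\<close> by (simp add: field_simps)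
  finally have "(-1) ^ (n - 1) * inverse c * inverse c * ((- sqrt q) ^ (n - 1) * qfact q (n - 1))
                  = 1" .
  then have "complex_of_real ((-1) ^ (n - 1) * inverse c * inverse c
               * ((- sqrt q) ^ (n - 1) * qfact q (n - 1))) = 1"
    by simp
  then show ?thesis
    unfolding R_scale_def c_def[symmetric] mu_def by simp
qed

lemma Rvec_eq_qwedge:
  assumes "sorted_wrt (<) is"
  shows "Rvec q is = (\<lambda>js. R_scale q (length is) * qwedge q (set is) js)"
proof
  fix js
  show "Rvec q is js = R_scale q (length is) * qwedge q (set is) js"
    unfolding Rvec_def Svec_eq_qwedge[OF assms] R_scale_def divide_inverse by (rule mult.commute)
qed

lemma Rbar_eq_qwedge:
  assumes "sorted_wrt (<) is"
  shows "Rbar q is = (\<lambda>js. ((-1) ^ (length is - 1) * R_scale q (length is)) * qwedge q (set is) js)"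
  unfolding Rbar_def Rvec_eq_qwedge[OF assms] by (simp add: mult.assoc)

theorem theorem5p5:
  fixes q :: real and d n :: nat and "is" :: "nat list"
  assumes "q > 0"
    and "2 \<le> n" and "n \<le> d"
    and "length is = n"
    and "sorted_wrt (<) is"
    and "set is \<subseteq> {1..d}"
  shows "Rvec q is \<in> tens_sub (n - 1) (Hbar q is) (tpow_sub (set is) 1)
     \<and> Rbar q is \<in> tens_sub 1 (tpow_sub (set is) 1) (Hbar q is)
     \<and> (\<forall>x \<in> tpow_sub (set is) 1. contract d n (Rbar q is) (tens 1 x (Rvec q is)) = x)
     \<and> (\<forall>y \<in> Hbar q is. contract d n (Rvec q is) (tens (n - 1) y (Rbar q is)) = y)"
proof -
  define I where "I = set is"
  have I: "I \<subseteq> {1..d}" "finite I" "card I = n" "1 \<le> n"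
    using assms(2,4-6) by (auto simp: I_def strict_sorted_iff distinct_card)
  let ?c = "R_scale q n"
  have Rvec: "Rvec q is = (\<lambda>js. ?c * qwedge q I js)"
    using Rvec_eq_qwedge[OF assms(5)] assms(4) by (simp add: I_def)
  have Rbar: "Rbar q is = (\<lambda>js. ((-1) ^ (n - 1) * ?c) * qwedge q I js)"
    using Rbar_eq_qwedge[OF assms(5)] assms(4) by (simp add: I_def)
  have Hbar: "Hbar q is = {y \<in> tpow_sub I (n - 1). q_antisym q y}"
    unfolding Hbar_def I_def assms(4) using Eop_image[OF assms(1)] by simp
  note norm = R_scale_normalization[OF assms(1) I(4)]
  show ?thesis
    unfolding I_def[symmetric]
  proof (intro conjI ballI ext)
    show "Rvec q is \<in> tens_sub (n - 1) (Hbar q is) (tpow_sub I 1)"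
      unfolding Rvec Hbar using qwedge_mem_tens_sub_last[of q I] assms(1) I by simp
    show "Rbar q is \<in> tens_sub 1 (tpow_sub I 1) (Hbar q is)"
      unfolding Rbar Hbar using qwedge_mem_tens_sub_first[of q I] assms(1) I by simp
  next
    fix x ks assume x: "x \<in> tpow_sub I 1"
    show "contract d n (Rbar q is) (tens 1 x (Rvec q is)) ks = x ks"
      unfolding Rvec Rbar contract_scale_tens contract_qwedge_first[OF assms(1) I(1,3,4) x]
      using norm by (simp only: mult.assoc[symmetric] mult_1)
  next
    fix y ks assume "y \<in> Hbar q is"
    then have y: "y \<in> tpow_sub I (n - 1)" "q_antisym q y"
      unfolding Hbar by auto
    show "contract d n (Rvec q is) (tens (n - 1) y (Rbar q is)) ks = y ks"
      unfolding Rvec Rbar contract_scale_tens contract_qwedge_second[OF assms(1) I(1,3,4) y]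
      using norm by (simp add: mult_ac)
  qed
qed

end
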